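(* Let $M$ be a monoidal category, $C$ an $M$-actegory and $x,y\in C$. Every 2-cell $\theta:R_x\Rightarrow R_y$ in $\mathit{Tamb}_{C,M}$ is of the form $R_f$ for a unique morphism $f\in C(x,y)$. Similarly, every 2-cell $\theta:L_y\Rightarrow L_x$ in $\mathit{Tamb}_{M,C}$ is of the form $L_f$ for a unique $f\in C(x,y)$.
   Context: $(M,\otimes,I,\lambda,a)$ is a monoidal category; an $M$-actegory is a category $C$ with a functor $\odot:M\times C\to C$ and coherent natural isomorphisms $\lambda_x:I\odot x\to x$, $a_{m,n,x}:(m\otimes n)\odot x\to m\odot(n\odot x)$; $M$ is an $M$-actegory via $\otimes$. Composition is diagrammatic. For $M$-actegories $C,D$, $\mathit{Tamb}_{C,D}$ is the category of functors $P:C^{op}\times D\to\mathrm{Set}$ equipped with strength maps $P(c,d)\to P(m\odot c,m\odot d)$ natural in $c,d$, (di)natural in $m$ and compatible with unitors/associators, with morphisms (2-cells) the strength-preserving natural transformations. For $x\in C$, $R_x\in\mathit{Tamb}_{C,M}$ is $(c,n)\mapsto C(c,n\odot x)$ with strength $h\mapsto(m\odot h);a^{-1}_{m,n,x}$, and $L_x\in\mathit{Tamb}_{M,C}$ is $(n,c)\mapsto C(n\odot x,c)$ with strength $h\mapsto a_{m,n,x};(m\odot h)$. For $f:x\to y$ in $C$, $R_f:R_x\Rightarrow R_y$ is postcomposition with $n\odot f$, and $L_f:L_y\Rightarrow L_x$ is precomposition with $n\odot f$. *)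

theory Defs
  imports Main
begin

record ('o, 'a) cat =
  ob  :: "'o set"
  hom :: "'o \<Rightarrow> 'o \<Rightarrow> 'a set"
  cmp :: "'a \<Rightarrow> 'a \<Rightarrow> 'a"   (* cmp f g = f ; g  (first f, then g) *)
  idn :: "'o \<Rightarrow> 'a"

definition category :: "('o, 'a, 'z) cat_scheme \<Rightarrow> bool" where
  "category C \<longleftrightarrow>
     (\<forall>x y. (x \<notin> ob C \<or> y \<notin> ob C) \<longrightarrow> hom C x y = {}) \<and>
     (\<forall>x y x' y'. hom C x y \<inter> hom C x' y' \<noteq> {} \<longrightarrow> x = x' \<and> y = y') \<and>
     (\<forall>x\<in>ob C. idn C x \<in> hom C x x) \<and>
     (\<forall>x\<in>ob C. \<forall>y\<in>ob C. \<forall>z\<in>ob C. \<forall>f\<in>hom C x y. \<forall>g\<in>hom C y z.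
        cmp C f g \<in> hom C x z) \<and>
     (\<forall>x\<in>ob C. \<forall>y\<in>ob C. \<forall>f\<in>hom C x y.
        cmp C (idn C x) f = f \<and> cmp C f (idn C y) = f) \<and>
     (\<forall>w\<in>ob C. \<forall>x\<in>ob C. \<forall>y\<in>ob C. \<forall>z\<in>ob C.
        \<forall>f\<in>hom C w x. \<forall>g\<in>hom C x y. \<forall>h\<in>hom C y z.
        cmp C (cmp C f g) h = cmp C f (cmp C g h))"

definition iso_pair :: "('o, 'a, 'z) cat_scheme \<Rightarrow> 'a \<Rightarrow> 'a \<Rightarrow> 'o \<Rightarrow> 'o \<Rightarrow> bool" where
  "iso_pair C f g x y \<longleftrightarrow> f \<in> hom C x y \<and> g \<in> hom C y x \<and>
     cmp C f g = idn C x \<and> cmp C g f = idn C y"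

record ('m, 'b) moncat = "('m, 'b) cat" +
  tens   :: "'m \<Rightarrow> 'm \<Rightarrow> 'm"
  tensA  :: "'b \<Rightarrow> 'b \<Rightarrow> 'b"
  munit  :: 'm
  lam    :: "'m \<Rightarrow> 'b"   lamI :: "'m \<Rightarrow> 'b"
  rho    :: "'m \<Rightarrow> 'b"   rhoI :: "'m \<Rightarrow> 'b"
  asc    :: "'m \<Rightarrow> 'm \<Rightarrow> 'm \<Rightarrow> 'b"   ascI :: "'m \<Rightarrow> 'm \<Rightarrow> 'm \<Rightarrow> 'b"

definition monoidal_category :: "('m, 'b, 'z) moncat_scheme \<Rightarrow> bool" where
  "monoidal_category M \<longleftrightarrow> category M \<and>
     munit M \<in> ob M \<and>
     (\<forall>m\<in>ob M. \<forall>n\<in>ob M. tens M m n \<in> ob M) \<and>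
     (\<forall>m\<in>ob M. \<forall>m'\<in>ob M. \<forall>n\<in>ob M. \<forall>n'\<in>ob M. \<forall>k\<in>hom M m m'. \<forall>l\<in>hom M n n'.
        tensA M k l \<in> hom M (tens M m n) (tens M m' n')) \<and>
     (\<forall>m\<in>ob M. \<forall>n\<in>ob M. tensA M (idn M m) (idn M n) = idn M (tens M m n)) \<and>
     (\<forall>m\<in>ob M. \<forall>m'\<in>ob M. \<forall>m''\<in>ob M. \<forall>n\<in>ob M. \<forall>n'\<in>ob M. \<forall>n''\<in>ob M.
        \<forall>k\<in>hom M m m'. \<forall>k'\<in>hom M m' m''. \<forall>l\<in>hom M n n'. \<forall>l'\<in>hom M n' n''.
        tensA M (cmp M k k') (cmp M l l') = cmp M (tensA M k l) (tensA M k' l')) \<and>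
     (\<forall>m\<in>ob M. iso_pair M (lam M m) (lamI M m) (tens M (munit M) m) m) \<and>
     (\<forall>m\<in>ob M. iso_pair M (rho M m) (rhoI M m) (tens M m (munit M)) m) \<and>
     (\<forall>m\<in>ob M. \<forall>n\<in>ob M. \<forall>p\<in>ob M.
        iso_pair M (asc M m n p) (ascI M m n p) (tens M (tens M m n) p) (tens M m (tens M n p))) \<and>
     (\<forall>m\<in>ob M. \<forall>n\<in>ob M. \<forall>k\<in>hom M m n.
        cmp M (tensA M (idn M (munit M)) k) (lam M n) = cmp M (lam M m) k) \<and>
     (\<forall>m\<in>ob M. \<forall>n\<in>ob M. \<forall>k\<in>hom M m n.
        cmp M (tensA M k (idn M (munit M))) (rho M n) = cmp M (rho M m) k) \<and>
     (\<forall>m\<in>ob M. \<forall>m'\<in>ob M. \<forall>n\<in>ob M. \<forall>n'\<in>ob M. \<forall>p\<in>ob M. \<forall>p'\<in>ob M.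
        \<forall>k\<in>hom M m m'. \<forall>l\<in>hom M n n'. \<forall>j\<in>hom M p p'.
        cmp M (tensA M (tensA M k l) j) (asc M m' n' p') =
        cmp M (asc M m n p) (tensA M k (tensA M l j))) \<and>
     (\<forall>m\<in>ob M. \<forall>n\<in>ob M. \<forall>p\<in>ob M. \<forall>q\<in>ob M.
        cmp M (asc M (tens M m n) p q) (asc M m n (tens M p q)) =
        cmp M (cmp M (tensA M (asc M m n p) (idn M q)) (asc M m (tens M n p) q))
              (tensA M (idn M m) (asc M n p q))) \<and>
     (\<forall>m\<in>ob M. \<forall>n\<in>ob M.
        cmp M (asc M m (munit M) n) (tensA M (idn M m) (lam M n)) =
        tensA M (rho M m) (idn M n))"

record ('m, 'b, 'o, 'a) actg =
  act   :: "'m \<Rightarrow> 'o \<Rightarrow> 'o"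
  actA  :: "'b \<Rightarrow> 'a \<Rightarrow> 'a"
  alam  :: "'o \<Rightarrow> 'a"   alamI :: "'o \<Rightarrow> 'a"
  aasc  :: "'m \<Rightarrow> 'm \<Rightarrow> 'o \<Rightarrow> 'a"   aascI :: "'m \<Rightarrow> 'm \<Rightarrow> 'o \<Rightarrow> 'a"

definition actegory ::
  "('m, 'b, 'z) moncat_scheme \<Rightarrow> ('o, 'a, 'y) cat_scheme \<Rightarrow> ('m, 'b, 'o, 'a, 'w) actg_scheme \<Rightarrow> bool" where
  "actegory M C A \<longleftrightarrow> monoidal_category M \<and> category C \<and>
     (\<forall>m\<in>ob M. \<forall>c\<in>ob C. act A m c \<in> ob C) \<and>
     (\<forall>m\<in>ob M. \<forall>m'\<in>ob M. \<forall>c\<in>ob C. \<forall>c'\<in>ob C. \<forall>k\<in>hom M m m'. \<forall>g\<in>hom C c c'.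
        actA A k g \<in> hom C (act A m c) (act A m' c')) \<and>
     (\<forall>m\<in>ob M. \<forall>c\<in>ob C. actA A (idn M m) (idn C c) = idn C (act A m c)) \<and>
     (\<forall>m\<in>ob M. \<forall>m'\<in>ob M. \<forall>m''\<in>ob M. \<forall>c\<in>ob C. \<forall>c'\<in>ob C. \<forall>c''\<in>ob C.
        \<forall>k\<in>hom M m m'. \<forall>k'\<in>hom M m' m''. \<forall>g\<in>hom C c c'. \<forall>g'\<in>hom C c' c''.
        actA A (cmp M k k') (cmp C g g') = cmp C (actA A k g) (actA A k' g')) \<and>
     (\<forall>c\<in>ob C. iso_pair C (alam A c) (alamI A c) (act A (munit M) c) c) \<and>
     (\<forall>m\<in>ob M. \<forall>n\<in>ob M. \<forall>c\<in>ob C.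
        iso_pair C (aasc A m n c) (aascI A m n c) (act A (tens M m n) c) (act A m (act A n c))) \<and>
     (\<forall>c\<in>ob C. \<forall>c'\<in>ob C. \<forall>g\<in>hom C c c'.
        cmp C (actA A (idn M (munit M)) g) (alam A c') = cmp C (alam A c) g) \<and>
     (\<forall>m\<in>ob M. \<forall>m'\<in>ob M. \<forall>n\<in>ob M. \<forall>n'\<in>ob M. \<forall>c\<in>ob C. \<forall>c'\<in>ob C.
        \<forall>k\<in>hom M m m'. \<forall>l\<in>hom M n n'. \<forall>g\<in>hom C c c'.
        cmp C (actA A (tensA M k l) g) (aasc A m' n' c') =
        cmp C (aasc A m n c) (actA A k (actA A l g))) \<and>
     (\<forall>m\<in>ob M. \<forall>n\<in>ob M. \<forall>p\<in>ob M. \<forall>c\<in>ob C.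
        cmp C (aasc A (tens M m n) p c) (aasc A m n (act A p c)) =
        cmp C (cmp C (actA A (asc M m n p) (idn C c)) (aasc A m (tens M n p) c))
              (actA A (idn M m) (aasc A n p c))) \<and>
     (\<forall>m\<in>ob M. \<forall>c\<in>ob C.
        cmp C (aasc A m (munit M) c) (actA A (idn M m) (alam A c)) =
        actA A (rho M m) (idn C c)) \<and>
     (\<forall>m\<in>ob M. \<forall>c\<in>ob C.
        cmp C (aasc A (munit M) m c) (alam A (act A m c)) =
        actA A (lam M m) (idn C c))"

text \<open>A family theta c n : C(c, n.x) -> C(c, n.y) is a 2-cell R_x => R_y in Tamb_{C,M}:
  it is natural in c (contravariant) and n (covariant), and preserves the strengths
  h |-> (m.h) ; a^{-1}_{m,n,x}.\<close>

definition R_2cell ::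
  "('m, 'b, 'z) moncat_scheme \<Rightarrow> ('o, 'a, 'y) cat_scheme \<Rightarrow> ('m, 'b, 'o, 'a, 'w) actg_scheme \<Rightarrow>
   'o \<Rightarrow> 'o \<Rightarrow> ('o \<Rightarrow> 'm \<Rightarrow> 'a \<Rightarrow> 'a) \<Rightarrow> bool" where
  "R_2cell M C A x y \<theta> \<longleftrightarrow>
     (\<forall>c\<in>ob C. \<forall>n\<in>ob M. \<forall>h\<in>hom C c (act A n x). \<theta> c n h \<in> hom C c (act A n y)) \<and>
     (\<forall>c\<in>ob C. \<forall>c'\<in>ob C. \<forall>n\<in>ob M. \<forall>n'\<in>ob M.
        \<forall>g\<in>hom C c' c. \<forall>k\<in>hom M n n'. \<forall>h\<in>hom C c (act A n x).
        \<theta> c' n' (cmp C (cmp C g h) (actA A k (idn C x))) =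
        cmp C (cmp C g (\<theta> c n h)) (actA A k (idn C y))) \<and>
     (\<forall>m\<in>ob M. \<forall>c\<in>ob C. \<forall>n\<in>ob M. \<forall>h\<in>hom C c (act A n x).
        \<theta> (act A m c) (tens M m n) (cmp C (actA A (idn M m) h) (aascI A m n x)) =
        cmp C (actA A (idn M m) (\<theta> c n h)) (aascI A m n y))"

definition R_of ::
  "('m, 'b, 'z) moncat_scheme \<Rightarrow> ('o, 'a, 'y) cat_scheme \<Rightarrow> ('m, 'b, 'o, 'a, 'w) actg_scheme \<Rightarrow>
   'a \<Rightarrow> 'o \<Rightarrow> 'm \<Rightarrow> 'a \<Rightarrow> 'a" where
  "R_of M C A f c n h = cmp C h (actA A (idn M n) f)"

text \<open>A family theta n c : C(n.y, c) -> C(n.x, c) is a 2-cell L_y => L_x in Tamb_{M,C}: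
  natural in n (contravariant) and c (covariant), preserving the strengths
  h |-> a_{m,n,-} ; (m.h).\<close>

definition L_2cell ::
  "('m, 'b, 'z) moncat_scheme \<Rightarrow> ('o, 'a, 'y) cat_scheme \<Rightarrow> ('m, 'b, 'o, 'a, 'w) actg_scheme \<Rightarrow>
   'o \<Rightarrow> 'o \<Rightarrow> ('m \<Rightarrow> 'o \<Rightarrow> 'a \<Rightarrow> 'a) \<Rightarrow> bool" where
  "L_2cell M C A y x \<theta> \<longleftrightarrow>
     (\<forall>n\<in>ob M. \<forall>c\<in>ob C. \<forall>h\<in>hom C (act A n y) c. \<theta> n c h \<in> hom C (act A n x) c) \<and>
     (\<forall>n\<in>ob M. \<forall>n'\<in>ob M. \<forall>c\<in>ob C. \<forall>c'\<in>ob C.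
        \<forall>k\<in>hom M n' n. \<forall>g\<in>hom C c c'. \<forall>h\<in>hom C (act A n y) c.
        \<theta> n' c' (cmp C (cmp C (actA A k (idn C y)) h) g) =
        cmp C (cmp C (actA A k (idn C x)) (\<theta> n c h)) g) \<and>
     (\<forall>m\<in>ob M. \<forall>n\<in>ob M. \<forall>c\<in>ob C. \<forall>h\<in>hom C (act A n y) c.
        \<theta> (tens M m n) (act A m c) (cmp C (aasc A m n y) (actA A (idn M m) h)) =
        cmp C (aasc A m n x) (actA A (idn M m) (\<theta> n c h)))"

definition L_of ::
  "('m, 'b, 'z) moncat_scheme \<Rightarrow> ('o, 'a, 'y) cat_scheme \<Rightarrow> ('m, 'b, 'o, 'a, 'w) actg_scheme \<Rightarrow>
   'a \<Rightarrow> 'm \<Rightarrow> 'o \<Rightarrow> 'a \<Rightarrow> 'a" where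
  "L_of M C A f n c h = cmp C (actA A (idn M n) f) h"

end

theory Submission
  imports Defs
begin

text \<open>
  By naturality in the object of \<open>C\<close> (the Yoneda argument), a 2-cell
  \<open>\<theta> : R\<^sub>x \<Rightarrow> R\<^sub>y\<close> is determined by its values \<open>\<theta>(id\<^bsub>n\<odot>x\<^esub>)\<close>.
  The triangle identity writes \<open>id\<^bsub>n\<odot>x\<^esub>\<close> as
  \<open>(n\<odot>\<lambda>\<^sub>x\<^sup>-\<^sup>1) ; a\<^sup>-\<^sup>1\<^bsub>n,I,x\<^esub> ; (\<rho>\<^sub>n\<odot>x)\<close>, so naturality in \<open>n\<close> and
  preservation of the strength give \<open>\<theta>(id\<^bsub>n\<odot>x\<^esub>) = n\<odot>f\<close> for
  \<open>f = \<theta>(\<lambda>\<^sub>x\<^sup>-\<^sup>1) ; \<lambda>\<^sub>y\<close>, i.e. \<open>\<theta> = R\<^sub>f\<close>. Conversely, naturality of \<open>\<lambda>\<close>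
  recovers \<open>f\<close> from \<open>R\<^sub>f\<close> by the same formula, which gives uniqueness.
  The case of \<open>L\<close> is dual, with \<open>f = \<lambda>\<^sub>x\<^sup>-\<^sup>1 ; \<theta>(\<lambda>\<^sub>y)\<close>.
\<close>

locale category_context =
  fixes C :: "('o, 'a, 'z) cat_scheme"
  assumes category: "category C"
begin

lemma hom_ob: "f \<in> hom C a b \<Longrightarrow> a \<in> ob C \<and> b \<in> ob C"
  using category unfolding category_def by (metis empty_iff)

lemma idn_hom: "a \<in> ob C \<Longrightarrow> idn C a \<in> hom C a a"
  using category unfolding category_def by blast

lemma cmp_hom: "f \<in> hom C a b \<Longrightarrow> g \<in> hom C b c \<Longrightarrow> cmp C f g \<in> hom C a c"
  using category hom_ob unfolding category_def by metis

lemma idn_left: "f \<in> hom C a b \<Longrightarrow> cmp C (idn C a) f = f"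
  using category hom_ob unfolding category_def by metis

lemma idn_right: "f \<in> hom C a b \<Longrightarrow> cmp C f (idn C b) = f"
  using category hom_ob unfolding category_def by metis

lemma cmp_assoc:
  assumes "f \<in> hom C a b" "g \<in> hom C b c" "h \<in> hom C c d"
  shows "cmp C (cmp C f g) h = cmp C f (cmp C g h)"
proof -
  have "a \<in> ob C" "b \<in> ob C" "c \<in> ob C" "d \<in> ob C"
    using assms hom_ob by blast+
  with assms show ?thesis
    using category unfolding category_def by blast
qed

lemma iso_pair_sym: "iso_pair C f g a b \<Longrightarrow> iso_pair C g f b a"
  unfolding iso_pair_def by blast

lemma iso_pair_idn: "a \<in> ob C \<Longrightarrow> iso_pair C (idn C a) (idn C a) a a"
  unfolding iso_pair_def using idn_hom idn_left by blast

lemma iso_pair_cancel_left: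
  assumes fg: "iso_pair C f g a b" and h: "h \<in> hom C b c"
  shows "cmp C g (cmp C f h) = h"
proof -
  have f: "f \<in> hom C a b" and g: "g \<in> hom C b a" and gf: "cmp C g f = idn C b"
    using fg unfolding iso_pair_def by blast+
  show ?thesis
    using cmp_assoc[OF g f h] gf idn_left[OF h] by simp
qed

lemma iso_pair_cmp:
  assumes fg: "iso_pair C f g a b" and fg': "iso_pair C f' g' b c"
  shows "iso_pair C (cmp C f f') (cmp C g' g) a c"
proof -
  have f: "f \<in> hom C a b" and g: "g \<in> hom C b a"
    and f': "f' \<in> hom C b c" and g': "g' \<in> hom C c b"
    using fg fg' unfolding iso_pair_def by blast+
  have "cmp C (cmp C f f') (cmp C g' g) = cmp C f (cmp C f' (cmp C g' g))"
    using cmp_assoc[OF f f' cmp_hom[OF g' g]] .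
  also have "\<dots> = idn C a"
    using fg iso_pair_cancel_left[OF iso_pair_sym[OF fg'] g] unfolding iso_pair_def by simp
  finally have "cmp C (cmp C f f') (cmp C g' g) = idn C a" .
  moreover have "cmp C (cmp C g' g) (cmp C f f') = cmp C g' (cmp C g (cmp C f f'))"
    using cmp_assoc[OF g' g cmp_hom[OF f f']] .
  moreover have "\<dots> = idn C c"
    using fg' iso_pair_cancel_left[OF fg f'] unfolding iso_pair_def by simp
  ultimately show ?thesis
    using f g f' g' cmp_hom unfolding iso_pair_def by simp
qed

lemma iso_pair_inverse_unique:
  assumes fg: "iso_pair C f g a b" and fg': "iso_pair C f g' a b"
  shows "g' = g"
proof -
  have g': "g' \<in> hom C b a" and g: "g \<in> hom C b a" and fg_idn: "cmp C f g = idn C a"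
    using fg fg' unfolding iso_pair_def by blast+
  have "g' = cmp C g' (cmp C f g)"
    using fg_idn idn_right[OF g'] by simp
  also have "\<dots> = g"
    using iso_pair_cancel_left[OF fg' g] .
  finally show ?thesis .
qed

end

locale actegory_context =
  fixes M :: "('m, 'b, 'z) moncat_scheme" and C :: "('o, 'a, 'y) cat_scheme"
    and A :: "('m, 'b, 'o, 'a, 'w) actg_scheme"
  assumes actegory: "actegory M C A"
begin

sublocale M: category_context M
  using actegory unfolding actegory_def monoidal_category_def by unfold_locales auto

sublocale C: category_context C
  using actegory unfolding actegory_def by unfold_locales auto

abbreviation seq (infixl ";;" 55) where "f ;; g \<equiv> cmp C f g"
abbreviation whisker (infixr "\<odot>" 60) where "n \<odot> g \<equiv> actA A (idn M n) g"

lemma munit_ob: "munit M \<in> ob M"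
  using actegory unfolding actegory_def monoidal_category_def by auto

lemma rho_iso_pair: "m \<in> ob M \<Longrightarrow> iso_pair M (rho M m) (rhoI M m) (tens M m (munit M)) m"
  using actegory unfolding actegory_def monoidal_category_def by auto

lemma act_ob: "m \<in> ob M \<Longrightarrow> c \<in> ob C \<Longrightarrow> act A m c \<in> ob C"
  using actegory unfolding actegory_def by auto

lemma actA_hom:
  assumes "k \<in> hom M m m'" and "g \<in> hom C c c'"
  shows "actA A k g \<in> hom C (act A m c) (act A m' c')"
proof -
  have "m \<in> ob M" "m' \<in> ob M" "c \<in> ob C" "c' \<in> ob C"
    using assms M.hom_ob C.hom_ob by blast+
  with assms show ?thesis
    using actegory unfolding actegory_def by auto
qed

lemma actA_idn: "m \<in> ob M \<Longrightarrow> c \<in> ob C \<Longrightarrow> actA A (idn M m) (idn C c) = idn C (act A m c)"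
  using actegory unfolding actegory_def by auto

lemma actA_cmp:
  assumes "k \<in> hom M m m'" "k' \<in> hom M m' m''" "g \<in> hom C c c'" "g' \<in> hom C c' c''"
  shows "actA A (cmp M k k') (g ;; g') = actA A k g ;; actA A k' g'"
proof -
  have "m \<in> ob M" "m' \<in> ob M" "m'' \<in> ob M" "c \<in> ob C" "c' \<in> ob C" "c'' \<in> ob C"
    using assms M.hom_ob C.hom_ob by blast+
  with assms show ?thesis
    using actegory unfolding actegory_def by auto
qed

lemma alam_iso_pair: "c \<in> ob C \<Longrightarrow> iso_pair C (alam A c) (alamI A c) (act A (munit M) c) c"
  using actegory unfolding actegory_def by auto

lemma aasc_iso_pair:
  "m \<in> ob M \<Longrightarrow> n \<in> ob M \<Longrightarrow> c \<in> ob C \<Longrightarrow>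
   iso_pair C (aasc A m n c) (aascI A m n c) (act A (tens M m n) c) (act A m (act A n c))"
  using actegory unfolding actegory_def by auto

lemma alam_natural:
  assumes "g \<in> hom C c c'"
  shows "munit M \<odot> g ;; alam A c' = alam A c ;; g"
proof -
  have "c \<in> ob C" "c' \<in> ob C"
    using assms C.hom_ob by blast+
  with assms show ?thesis
    using actegory unfolding actegory_def by auto
qed

lemma act_triangle:
  "m \<in> ob M \<Longrightarrow> c \<in> ob C \<Longrightarrow>
   aasc A m (munit M) c ;; m \<odot> alam A c = actA A (rho M m) (idn C c)"
  using actegory unfolding actegory_def by auto

lemma alam_hom: "c \<in> ob C \<Longrightarrow> alam A c \<in> hom C (act A (munit M) c) c"
  and alamI_hom: "c \<in> ob C \<Longrightarrow> alamI A c \<in> hom C c (act A (munit M) c)"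
  using alam_iso_pair unfolding iso_pair_def by blast+

lemma aasc_hom:
  "m \<in> ob M \<Longrightarrow> n \<in> ob M \<Longrightarrow> c \<in> ob C \<Longrightarrow>
   aasc A m n c \<in> hom C (act A (tens M m n) c) (act A m (act A n c))"
  and aascI_hom:
  "m \<in> ob M \<Longrightarrow> n \<in> ob M \<Longrightarrow> c \<in> ob C \<Longrightarrow>
   aascI A m n c \<in> hom C (act A m (act A n c)) (act A (tens M m n) c)"
  using aasc_iso_pair unfolding iso_pair_def by blast+

lemma rho_hom: "m \<in> ob M \<Longrightarrow> rho M m \<in> hom M (tens M m (munit M)) m"
  and rhoI_hom: "m \<in> ob M \<Longrightarrow> rhoI M m \<in> hom M m (tens M m (munit M))"
  using rho_iso_pair unfolding iso_pair_def by blast+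

lemma actA_iso_pair:
  assumes kk': "iso_pair M k k' m m'" and gg': "iso_pair C g g' c c'"
  shows "iso_pair C (actA A k g) (actA A k' g') (act A m c) (act A m' c')"
proof -
  have k: "k \<in> hom M m m'" and k': "k' \<in> hom M m' m"
    and g: "g \<in> hom C c c'" and g': "g' \<in> hom C c' c"
    using kk' gg' unfolding iso_pair_def by blast+
  have "m \<in> ob M" "m' \<in> ob M" "c \<in> ob C" "c' \<in> ob C"
    using k g M.hom_ob C.hom_ob by blast+
  then show ?thesis
    using kk' gg' actA_cmp[OF k k' g g'] actA_cmp[OF k' k g' g] actA_idn
      actA_hom[OF k g] actA_hom[OF k' g'] unfolding iso_pair_def by simp
qed

lemma whisker_hom: "n \<in> ob M \<Longrightarrow> g \<in> hom C c c' \<Longrightarrow> n \<odot> g \<in> hom C (act A n c) (act A n c')"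
  using actA_hom M.idn_hom by blast

lemma whisker_cmp:
  assumes n: "n \<in> ob M" and "g \<in> hom C c c'" "g' \<in> hom C c' c''"
  shows "n \<odot> (g ;; g') = n \<odot> g ;; n \<odot> g'"
  using actA_cmp[OF M.idn_hom[OF n] M.idn_hom[OF n] assms(2,3)] M.idn_left[OF M.idn_hom[OF n]]
  by simp

lemma act_triangle_inv:
  assumes m: "m \<in> ob M" and c: "c \<in> ob C"
  shows "aascI A m (munit M) c ;; actA A (rho M m) (idn C c) = m \<odot> alam A c"
  using C.iso_pair_cancel_left[OF aasc_iso_pair[OF m munit_ob c]
      whisker_hom[OF m alam_hom[OF c]]] act_triangle[OF m c]
  by simp

lemma act_triangle_inv':
  assumes m: "m \<in> ob M" and c: "c \<in> ob C"
  shows "actA A (rhoI M m) (idn C c) ;; aasc A m (munit M) c = m \<odot> alamI A c"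
proof (rule C.iso_pair_inverse_unique)
  show "iso_pair C (m \<odot> alam A c) (m \<odot> alamI A c) (act A m (act A (munit M) c)) (act A m c)"
    using actA_iso_pair[OF M.iso_pair_idn[OF m] alam_iso_pair[OF c]] .
  show "iso_pair C (m \<odot> alam A c) (actA A (rhoI M m) (idn C c) ;; aasc A m (munit M) c)
          (act A m (act A (munit M) c)) (act A m c)"
    using C.iso_pair_cmp[OF C.iso_pair_sym[OF aasc_iso_pair[OF m munit_ob c]]
        actA_iso_pair[OF rho_iso_pair[OF m] C.iso_pair_idn[OF c]]]
    unfolding act_triangle_inv[OF m c] .
qed

lemma R_of_unit_alamI:
  assumes g: "g \<in> hom C x y"
  shows "R_of M C A g x (munit M) (alamI A x) ;; alam A y = g"
proof -
  have x: "x \<in> ob C" and y: "y \<in> ob C"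
    using g C.hom_ob by blast+
  have "R_of M C A g x (munit M) (alamI A x) ;; alam A y
      = alamI A x ;; (munit M \<odot> g ;; alam A y)"
    unfolding R_of_def
    using C.cmp_assoc[OF alamI_hom[OF x] whisker_hom[OF munit_ob g] alam_hom[OF y]] .
  also have "\<dots> = g"
    unfolding alam_natural[OF g] using C.iso_pair_cancel_left[OF alam_iso_pair[OF x] g] .
  finally show ?thesis .
qed

lemma L_of_unit_alam:
  assumes g: "g \<in> hom C x y"
  shows "alamI A x ;; L_of M C A g (munit M) y (alam A y) = g"
  unfolding L_of_def alam_natural[OF g]
  using C.iso_pair_cancel_left[OF alam_iso_pair g] C.hom_ob[OF g] by blast

context
  fixes x y \<theta>
  assumes x: "x \<in> ob C" and y: "y \<in> ob C" and R: "R_2cell M C A x y \<theta>"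
begin

lemma R_hom: "n \<in> ob M \<Longrightarrow> h \<in> hom C c (act A n x) \<Longrightarrow> \<theta> c n h \<in> hom C c (act A n y)"
  using R C.hom_ob unfolding R_2cell_def by blast

lemma R_natural_dom:
  assumes n: "n \<in> ob M" and g: "g \<in> hom C c' c" and h: "h \<in> hom C c (act A n x)"
  shows "\<theta> c' n (g ;; h) = g ;; \<theta> c n h"
proof -
  have "c \<in> ob C" "c' \<in> ob C"
    using g C.hom_ob by blast+
  then have "\<theta> c' n (g ;; h ;; n \<odot> idn C x) = g ;; \<theta> c n h ;; n \<odot> idn C y"
    using R n g h M.idn_hom[OF n] unfolding R_2cell_def by blast
  then show ?thesis
    using actA_idn[OF n x] actA_idn[OF n y] C.idn_right C.cmp_hom[OF g h]
      C.cmp_hom[OF g R_hom[OF n h]] by simp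
qed

lemma R_natural_cod:
  assumes k: "k \<in> hom M n n'" and h: "h \<in> hom C c (act A n x)"
  shows "\<theta> c n' (h ;; actA A k (idn C x)) = \<theta> c n h ;; actA A k (idn C y)"
proof -
  have "n \<in> ob M" "n' \<in> ob M" "c \<in> ob C"
    using k h M.hom_ob C.hom_ob by blast+
  then have "\<theta> c n' (idn C c ;; h ;; actA A k (idn C x)) = idn C c ;; \<theta> c n h ;; actA A k (idn C y)"
    using R k h C.idn_hom unfolding R_2cell_def by blast
  then show ?thesis
    using C.idn_left h R_hom[OF \<open>n \<in> ob M\<close> h] by simp
qed

lemma R_strength:
  "m \<in> ob M \<Longrightarrow> n \<in> ob M \<Longrightarrow> h \<in> hom C c (act A n x) \<Longrightarrow>
   \<theta> (act A m c) (tens M m n) (m \<odot> h ;; aascI A m n x) = m \<odot> \<theta> c n h ;; aascI A m n y"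
  using R C.hom_ob unfolding R_2cell_def by blast

lemma R_eq_cmp_at_idn:
  assumes n: "n \<in> ob M" and h: "h \<in> hom C c (act A n x)"
  shows "\<theta> c n h = h ;; \<theta> (act A n x) n (idn C (act A n x))"
  using R_natural_dom[OF n h C.idn_hom[OF act_ob[OF n x]]] C.idn_right[OF h] by simp

lemma R_at_idn:
  assumes n: "n \<in> ob M"
  shows "\<theta> (act A n x) n (idn C (act A n x)) = n \<odot> (\<theta> x (munit M) (alamI A x) ;; alam A y)"
proof -
  define t where "t = \<theta> x (munit M) (alamI A x)"
  have t: "t \<in> hom C x (act A (munit M) y)"
    unfolding t_def using R_hom[OF munit_ob alamI_hom[OF x]] .
  define h where "h = n \<odot> alamI A x ;; aascI A n (munit M) x"
  have h: "h \<in> hom C (act A n x) (act A (tens M n (munit M)) x)"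
    unfolding h_def using C.cmp_hom[OF whisker_hom[OF n alamI_hom[OF x]] aascI_hom[OF n munit_ob x]] .
  have "h ;; actA A (rho M n) (idn C x) = n \<odot> alamI A x ;; n \<odot> alam A x"
    unfolding h_def act_triangle_inv[OF n x, symmetric]
    using C.cmp_assoc[OF whisker_hom[OF n alamI_hom[OF x]] aascI_hom[OF n munit_ob x]
        actA_hom[OF rho_hom[OF n] C.idn_hom[OF x]]] .
  also have "\<dots> = idn C (act A n x)"
    using whisker_cmp[OF n alamI_hom[OF x] alam_hom[OF x], symmetric] alam_iso_pair[OF x]
      actA_idn[OF n x] unfolding iso_pair_def by simp
  finally have "\<theta> (act A n x) n (idn C (act A n x)) = \<theta> (act A n x) n (h ;; actA A (rho M n) (idn C x))"
    by simp
  also have "\<dots> = \<theta> (act A n x) (tens M n (munit M)) h ;; actA A (rho M n) (idn C y)"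
    using R_natural_cod[OF rho_hom[OF n] h] .
  also have "\<dots> = n \<odot> t ;; aascI A n (munit M) y ;; actA A (rho M n) (idn C y)"
    unfolding h_def t_def using R_strength[OF n munit_ob alamI_hom[OF x]] by simp
  also have "\<dots> = n \<odot> t ;; n \<odot> alam A y"
    using C.cmp_assoc[OF whisker_hom[OF n t] aascI_hom[OF n munit_ob y]
        actA_hom[OF rho_hom[OF n] C.idn_hom[OF y]]] act_triangle_inv[OF n y] by simp
  also have "\<dots> = n \<odot> (t ;; alam A y)"
    using whisker_cmp[OF n t alam_hom[OF y]] by simp
  finally show ?thesis
    unfolding t_def .
qed

lemma R_2cell_ex1_R_of:
  "\<exists>!f. f \<in> hom C x y \<and>
     (\<forall>c\<in>ob C. \<forall>n\<in>ob M. \<forall>h\<in>hom C c (act A n x). \<theta> c n h = R_of M C A f c n h)"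
proof (rule ex1I)
  let ?f = "\<theta> x (munit M) (alamI A x) ;; alam A y"
  show "?f \<in> hom C x y \<and>
     (\<forall>c\<in>ob C. \<forall>n\<in>ob M. \<forall>h\<in>hom C c (act A n x). \<theta> c n h = R_of M C A ?f c n h)"
    using C.cmp_hom[OF R_hom[OF munit_ob alamI_hom[OF x]] alam_hom[OF y]]
      R_eq_cmp_at_idn R_at_idn unfolding R_of_def by simp
  fix g
  assume "g \<in> hom C x y \<and>
     (\<forall>c\<in>ob C. \<forall>n\<in>ob M. \<forall>h\<in>hom C c (act A n x). \<theta> c n h = R_of M C A g c n h)"
  then show "g = ?f"
    using R_of_unit_alamI munit_ob alamI_hom[OF x] x by simp
qed

end

context
  fixes x y \<theta>
  assumes x: "x \<in> ob C" and y: "y \<in> ob C" and L: "L_2cell M C A y x \<theta>"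
begin

lemma L_hom: "n \<in> ob M \<Longrightarrow> h \<in> hom C (act A n y) c \<Longrightarrow> \<theta> n c h \<in> hom C (act A n x) c"
  using L C.hom_ob unfolding L_2cell_def by blast

lemma L_natural_cod:
  assumes n: "n \<in> ob M" and h: "h \<in> hom C (act A n y) c" and g: "g \<in> hom C c c'"
  shows "\<theta> n c' (h ;; g) = \<theta> n c h ;; g"
proof -
  have "c \<in> ob C" "c' \<in> ob C"
    using g C.hom_ob by blast+
  then have "\<theta> n c' (n \<odot> idn C y ;; h ;; g) = n \<odot> idn C x ;; \<theta> n c h ;; g"
    using L n g h M.idn_hom[OF n] unfolding L_2cell_def by blast
  then show ?thesis
    using actA_idn[OF n x] actA_idn[OF n y] C.idn_left h L_hom[OF n h] by simp
qed

lemma L_natural_dom: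
  assumes k: "k \<in> hom M n' n" and h: "h \<in> hom C (act A n y) c"
  shows "\<theta> n' c (actA A k (idn C y) ;; h) = actA A k (idn C x) ;; \<theta> n c h"
proof -
  have "n \<in> ob M" "n' \<in> ob M" "c \<in> ob C"
    using k h M.hom_ob C.hom_ob by blast+
  then have "\<theta> n' c (actA A k (idn C y) ;; h ;; idn C c) = actA A k (idn C x) ;; \<theta> n c h ;; idn C c"
    using L k h C.idn_hom unfolding L_2cell_def by blast
  then show ?thesis
    using C.idn_right[OF C.cmp_hom[OF actA_hom[OF k C.idn_hom[OF y]] h]]
      C.idn_right[OF C.cmp_hom[OF actA_hom[OF k C.idn_hom[OF x]] L_hom[OF \<open>n \<in> ob M\<close> h]]]
    by simp
qed

lemma L_strength:
  "m \<in> ob M \<Longrightarrow> n \<in> ob M \<Longrightarrow> h \<in> hom C (act A n y) c \<Longrightarrow>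
   \<theta> (tens M m n) (act A m c) (aasc A m n y ;; m \<odot> h) = aasc A m n x ;; m \<odot> \<theta> n c h"
  using L C.hom_ob unfolding L_2cell_def by blast

lemma L_eq_at_idn_cmp:
  assumes n: "n \<in> ob M" and h: "h \<in> hom C (act A n y) c"
  shows "\<theta> n c h = \<theta> n (act A n y) (idn C (act A n y)) ;; h"
  using L_natural_cod[OF n C.idn_hom[OF act_ob[OF n y]] h] C.idn_left[OF h] by simp

lemma L_at_idn:
  assumes n: "n \<in> ob M"
  shows "\<theta> n (act A n y) (idn C (act A n y)) = n \<odot> (alamI A x ;; \<theta> (munit M) y (alam A y))"
proof -
  define t where "t = \<theta> (munit M) y (alam A y)"
  have t: "t \<in> hom C (act A (munit M) x) y"
    unfolding t_def using L_hom[OF munit_ob alam_hom[OF y]] .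
  have rho_y: "actA A (rho M n) (idn C y) \<in> hom C (act A (tens M n (munit M)) y) (act A n y)"
    using actA_hom[OF rho_hom[OF n] C.idn_hom[OF y]] .
  have "idn C (act A n y) = actA A (rhoI M n) (idn C y) ;; actA A (rho M n) (idn C y)"
    using actA_iso_pair[OF rho_iso_pair[OF n] C.iso_pair_idn[OF y]] unfolding iso_pair_def
    by simp
  then have "\<theta> n (act A n y) (idn C (act A n y))
      = actA A (rhoI M n) (idn C x) ;; \<theta> (tens M n (munit M)) (act A n y) (actA A (rho M n) (idn C y))"
    using L_natural_dom[OF rhoI_hom[OF n] rho_y] by simp
  also have "\<dots> = actA A (rhoI M n) (idn C x) ;; (aasc A n (munit M) x ;; n \<odot> t)"
    unfolding t_def act_triangle[OF n y, symmetric] using L_strength[OF n munit_ob alam_hom[OF y]] by simp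
  also have "\<dots> = n \<odot> alamI A x ;; n \<odot> t"
    using C.cmp_assoc[OF actA_hom[OF rhoI_hom[OF n] C.idn_hom[OF x]] aasc_hom[OF n munit_ob x]
        whisker_hom[OF n t], symmetric] act_triangle_inv'[OF n x] by simp
  also have "\<dots> = n \<odot> (alamI A x ;; t)"
    using whisker_cmp[OF n alamI_hom[OF x] t] by simp
  finally show ?thesis
    unfolding t_def .
qed

lemma L_2cell_ex1_L_of:
  "\<exists>!f. f \<in> hom C x y \<and>
     (\<forall>n\<in>ob M. \<forall>c\<in>ob C. \<forall>h\<in>hom C (act A n y) c. \<theta> n c h = L_of M C A f n c h)"
proof (rule ex1I)
  let ?f = "alamI A x ;; \<theta> (munit M) y (alam A y)"
  show "?f \<in> hom C x y \<and>
     (\<forall>n\<in>ob M. \<forall>c\<in>ob C. \<forall>h\<in>hom C (act A n y) c. \<theta> n c h = L_of M C A ?f n c h)"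
    using C.cmp_hom[OF alamI_hom[OF x] L_hom[OF munit_ob alam_hom[OF y]]]
      L_eq_at_idn_cmp L_at_idn unfolding L_of_def by simp
  fix g
  assume "g \<in> hom C x y \<and>
     (\<forall>n\<in>ob M. \<forall>c\<in>ob C. \<forall>h\<in>hom C (act A n y) c. \<theta> n c h = L_of M C A g n c h)"
  then show "g = ?f"
    using L_of_unit_alam munit_ob alam_hom[OF y] y by simp
qed

end

end

theorem mainTheorem6:
  fixes M :: "('m, 'b) moncat" and C :: "('o, 'a) cat" and A :: "('m, 'b, 'o, 'a) actg"
  assumes "actegory M C A" and "x \<in> ob C" and "y \<in> ob C"
  shows "(\<forall>\<theta>. R_2cell M C A x y \<theta> \<longrightarrow>
            (\<exists>!f. f \<in> hom C x y \<and>
               (\<forall>c\<in>ob C. \<forall>n\<in>ob M. \<forall>h\<in>hom C c (act A n x). \<theta> c n h = R_of M C A f c n h))) \<and>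
         (\<forall>\<theta>. L_2cell M C A y x \<theta> \<longrightarrow>
            (\<exists>!f. f \<in> hom C x y \<and>
               (\<forall>n\<in>ob M. \<forall>c\<in>ob C. \<forall>h\<in>hom C (act A n y) c. \<theta> n c h = L_of M C A f n c h)))"
proof -
  interpret actegory_context M C A
    using assms(1) by unfold_locales
  show ?thesis
    using R_2cell_ex1_R_of[OF assms(2,3)] L_2cell_ex1_L_of[OF assms(2,3)] by blast
qed

end
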